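(* Let $X$ be a compact metric countable space and $f:X\to X$ a continuous function such that every accumulation point of $X$ is a fixed point of $f$. For every accumulation point $a$ of $X$, the following are equivalent: (1) there is $p\in\mathbb N^*$ such that $f^p$ is discontinuous at $a$; (2) there are a periodic point $b\in X\setminus\{a\}$ and a sequence $(a_n)_{n\in\mathbb N}$ in $X$ such that $a_n\to a$ and $b\in\overline{\mathcal O_f(a_n)}$ for all $n\in\mathbb N$; (3) $f^p$ is discontinuous at $a$ for every $p\in\mathbb N^*$.
   Context: $\mathbb N^*$ denotes the set of free ultrafilters on $\mathbb N$. For $p\in\mathbb N^*$ and a sequence $(x_n)$ in $X$, $x=p\text{-}\lim_{n\to\infty}x_n$ means that for every neighborhood $V$ of $x$, $\{n\in\mathbb N: x_n\in V\}\in p$. The $p$-iterate of $f$ is the function $f^p:X\to X$, $f^p(x)=p\text{-}\lim_{n\to\infty}f^n(x)$. The orbit of $x$ is $\mathcal O_f(x)=\{f^n(x):n\in\mathbb N\}$. A point $x$ is periodic if $f^n(x)=x$ for some $n\ge1$. An accumulation point of $X$ is a non-isolated point. *)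

theory Defs
  imports "HOL-Analysis.Analysis"
begin

text \<open>A free ultrafilter on the natural numbers (an element of N*), represented as a
  filter in Isabelle's sense: proper, ultra, and containing every cofinite set.\<close>
definition free_ultrafilter :: "nat filter \<Rightarrow> bool" where
  "free_ultrafilter p \<longleftrightarrow>
     p \<noteq> bot \<and>
     (\<forall>A. eventually (\<lambda>n. n \<in> A) p \<or> eventually (\<lambda>n. n \<notin> A) p) \<and>
     p \<le> cofinite"

definition p_iterate :: "nat filter \<Rightarrow> ('a::t2_space \<Rightarrow> 'a) \<Rightarrow> 'a \<Rightarrow> 'a" where
  "p_iterate p f x = Lim p (\<lambda>n. (f ^^ n) x)"

definition orbit :: "('a \<Rightarrow> 'a) \<Rightarrow> 'a \<Rightarrow> 'a set" where
  "orbit f x = {(f ^^ n) x | n. True}"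

definition periodic_point :: "('a \<Rightarrow> 'a) \<Rightarrow> 'a \<Rightarrow> bool" where
  "periodic_point f x \<longleftrightarrow> (\<exists>n\<ge>1. (f ^^ n) x = x)"

end

theory Submission
  imports Defs
begin

text \<open>
  Since \<open>X\<close> is countable, around any centre \<open>c\<close> almost every radius \<open>r\<close> is not a distance
  from \<open>c\<close> to a point of \<open>X\<close>, and for such \<open>r\<close> only finitely many points of \<open>X\<close> are mapped
  by \<open>f\<close> across the sphere of radius \<open>r\<close> around \<open>c\<close>. It follows that the p-limit of every orbit
  is periodic, and that it lies in the finite orbit of each periodic point in the closure of
  that orbit.

  If \<open>b \<noteq> a\<close> is periodic and lies in the closures of the orbits of \<open>a\<^sub>n \<rightarrow> a\<close>, the points
  \<open>f\<^sup>p(a\<^sub>n)\<close> stay in the finite orbit of \<open>b\<close>, so they cannot converge to \<open>f\<^sup>p(a) = a\<close>.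
  Conversely, if \<open>f\<^sup>p\<close> is discontinuous at \<open>a\<close>, points arbitrarily close to \<open>a\<close> are sent
  by \<open>f\<^sup>p\<close> outside a ball around \<open>a\<close>; each of their orbits leaves the ball through one of the
  finitely many points mapped across its boundary, so one such point \<open>w\<close> lies on the orbits of
  a sequence \<open>a\<^sub>n \<rightarrow> a\<close>, and \<open>b = f\<^sup>p(w)\<close> is the required periodic point. Finally, (3) implies (1) because free
  ultrafilters exist.
\<close>

section \<open>Ultrafilters\<close>

definition ultrafilter :: "'a filter \<Rightarrow> bool" where
  "ultrafilter F \<longleftrightarrow> F \<noteq> bot \<and> (\<forall>P. eventually P F \<or> eventually (\<lambda>x. \<not> P x) F)"

lemma free_ultrafilter_iff: "free_ultrafilter p \<longleftrightarrow> ultrafilter p \<and> p \<le> sequentially"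
proof -
  have "(\<forall>A. eventually (\<lambda>n. n \<in> A) p \<or> eventually (\<lambda>n. n \<notin> A) p) \<longleftrightarrow>
      (\<forall>P. eventually P p \<or> eventually (\<lambda>n. \<not> P n) p)"
  proof (intro iffI allI)
    fix P assume "\<forall>A. eventually (\<lambda>n. n \<in> A) p \<or> eventually (\<lambda>n. n \<notin> A) p"
    then have "eventually (\<lambda>n. n \<in> {n. P n}) p \<or> eventually (\<lambda>n. n \<notin> {n. P n}) p"
      by (rule spec)
    then show "eventually P p \<or> eventually (\<lambda>n. \<not> P n) p" by simp
  next
    fix A assume "\<forall>P. eventually P p \<or> eventually (\<lambda>n. \<not> P n) p"
    then show "eventually (\<lambda>n. n \<in> A) p \<or> eventually (\<lambda>n. n \<notin> A) p" by (rule allE)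
  qed
  then show ?thesis
    unfolding free_ultrafilter_def ultrafilter_def cofinite_eq_sequentially by blast
qed

lemma ex_ultrafilter_le:
  fixes F :: "'a filter"
  assumes "F \<noteq> bot"
  obtains U where "U \<le> F" "ultrafilter U"
proof -
  let ?A = "{G. G \<noteq> bot \<and> G \<le> F}"
  have "\<exists>m\<in>?A. \<forall>G\<in>?A. G \<le> m \<longrightarrow> G = m"
  proof (rule predicate_Zorn)
    show "partial_order_on ?A (relation_of (\<lambda>G H. H \<le> G) ?A)"
      by (rule partial_order_on_relation_ofI) auto
  next
    fix C assume C: "C \<in> Chains (relation_of (\<lambda>G H. H \<le> G) ?A)"
    then have CA: "C \<subseteq> ?A" by (rule Chains_relation_of)
    have total: "G \<le> H \<or> H \<le> G" if "G \<in> C" "H \<in> C" for G H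
      using C that unfolding Chains_def relation_of_def by blast
    show "\<exists>U\<in>?A. \<forall>G\<in>C. U \<le> G"
    proof (cases "C = {}")
      case True
      then show ?thesis using assms by auto
    next
      case False
      have "eventually P (Inf C) \<longleftrightarrow> (\<exists>G\<in>C. eventually P G)" for P
      proof (rule eventually_Inf_base[OF False])
        fix G H assume "G \<in> C" "H \<in> C"
        then show "\<exists>U\<in>C. U \<le> inf G H"
          using total[of G H] by (auto intro: bexI[of _ G] bexI[of _ H])
      qed
      then have "Inf C \<noteq> bot"
        using CA by (auto simp: trivial_limit_def)
      moreover obtain G where "G \<in> C" using False by blast
      then have "Inf C \<le> F" using CA by (blast intro: Inf_lower2)
      ultimately show ?thesis by (blast intro: Inf_lower)
    qed
  qed
  then obtain U where U: "U \<noteq> bot" "U \<le> F"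
    and maximal: "\<And>G. G \<noteq> bot \<Longrightarrow> G \<le> U \<Longrightarrow> G = U"
    using dual_order.trans by blast
  have "eventually P U" if "\<not> eventually (\<lambda>x. \<not> P x) U" for P
  proof -
    have "inf U (principal {x. P x}) \<noteq> bot"
      using that by (simp add: trivial_limit_def eventually_inf_principal)
    then have "inf U (principal {x. P x}) = U" by (rule maximal) simp
    moreover have "eventually P (inf U (principal {x. P x}))" by (simp add: eventually_inf_principal)
    ultimately show ?thesis by simp
  qed
  then have "ultrafilter U" using U(1) unfolding ultrafilter_def by blast
  with U(2) show thesis by (rule that)
qed

lemma ex_free_ultrafilter: "\<exists>p. free_ultrafilter p"
  by (metis ex_ultrafilter_le free_ultrafilter_iff trivial_limit_sequentially)

lemma ultrafilter_tendsto_in_compact: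
  assumes F: "ultrafilter F" and K: "compact K" and ev: "eventually (\<lambda>x. g x \<in> K) F"
  obtains y where "y \<in> K" "(g \<longlongrightarrow> y) F"
proof -
  have "filtermap g F \<noteq> bot" using F by (simp add: ultrafilter_def filtermap_bot_iff)
  moreover have "eventually (\<lambda>z. z \<in> K) (filtermap g F)" using ev by (simp add: eventually_filtermap)
  ultimately obtain y where y: "y \<in> K" "inf (nhds y) (filtermap g F) \<noteq> bot"
    using K unfolding compact_filter by blast
  have "eventually (\<lambda>x. g x \<in> S) F" if "open S" "y \<in> S" for S
  proof (rule ccontr)
    assume "\<not> eventually (\<lambda>x. g x \<in> S) F"
    then have "eventually (\<lambda>z. z \<notin> S) (filtermap g F)"
      using F by (auto simp: ultrafilter_def eventually_filtermap)
    moreover have "eventually (\<lambda>z. z \<in> S) (nhds y)" using that by (rule eventually_nhds_in_open)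
    ultimately have "eventually (\<lambda>z. False) (inf (nhds y) (filtermap g F))"
      unfolding eventually_inf by blast
    then show False using y(2) by (simp add: trivial_limit_def)
  qed
  then have "(g \<longlongrightarrow> y) F" by (rule topological_tendstoI)
  with y(1) show thesis by (rule that)
qed

lemma free_ultrafilter_eventually_infinite:
  assumes "free_ultrafilter p" "eventually P p"
  shows "infinite {n. P n}"
proof
  assume "finite {n. P n}"
  then have "eventually (\<lambda>n. \<not> P n) sequentially"
    by (simp add: cofinite_eq_sequentially[symmetric] eventually_cofinite)
  then have "eventually (\<lambda>n. \<not> P n) p"
    using assms(1) by (auto simp: free_ultrafilter_iff intro: filter_leD)
  with assms(2) have "eventually (\<lambda>n. False) p" by eventually_elim simp
  with assms(1) show False by (simp add: free_ultrafilter_iff ultrafilter_def trivial_limit_def)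
qed

section \<open>Orbits and periodic points\<close>

lemma funpow_add_apply: "(f ^^ m) ((f ^^ n) x) = (f ^^ (m + n)) x"
  by (simp add: funpow_add)

lemma funpow_fixed_point: "f a = a \<Longrightarrow> (f ^^ n) a = a"
  by (induction n) auto

lemma orbit_fixed_point: "f a = a \<Longrightarrow> orbit f a = {a}"
  by (auto simp: orbit_def funpow_fixed_point)

lemma funpow_in_orbit [simp]: "(f ^^ n) x \<in> orbit f x"
  by (auto simp: orbit_def)

lemma self_in_orbit [simp]: "x \<in> orbit f x"
  using funpow_in_orbit[where n = 0] by simp

lemma orbitE:
  assumes "y \<in> orbit f x"
  obtains n where "y = (f ^^ n) x"
  using assms by (auto simp: orbit_def)

lemma funpow_in_orbit_funpow:
  assumes "i \<le> n"
  shows "(f ^^ n) x \<in> orbit f ((f ^^ i) x)"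
proof -
  have "(f ^^ n) x = (f ^^ (n - i)) ((f ^^ i) x)"
    using assms by (simp add: funpow_add_apply)
  then show ?thesis by simp
qed

lemma orbit_subset_orbit:
  assumes "y \<in> orbit f x"
  shows "orbit f y \<subseteq> orbit f x"
proof
  fix z assume "z \<in> orbit f y"
  with assms obtain k n where "y = (f ^^ k) x" "z = (f ^^ n) y" by (auto elim!: orbitE)
  then have "z = (f ^^ (n + k)) x" by (simp add: funpow_add_apply)
  then show "z \<in> orbit f x" by simp
qed

lemma funpow_mod_period:
  assumes "(f ^^ m) b = b"
  shows "(f ^^ (n mod m)) b = (f ^^ n) b"
proof -
  have "(f ^^ (m * (n div m))) b = b"
    using assms by (simp add: funpow_mult[symmetric] funpow_fixed_point)
  moreover have "(f ^^ n) b = (f ^^ (n mod m)) ((f ^^ (m * (n div m))) b)"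
    by (simp add: funpow_add_apply)
  ultimately show ?thesis by simp
qed

lemma finite_orbit_if_periodic_point:
  assumes "periodic_point f b"
  shows "finite (orbit f b)"
proof -
  obtain m where m: "m \<ge> 1" "(f ^^ m) b = b"
    using assms by (auto simp: periodic_point_def)
  have "orbit f b \<subseteq> (\<lambda>k. (f ^^ k) b) ` {..<m}"
  proof
    fix y assume "y \<in> orbit f b"
    then obtain n where "y = (f ^^ n) b" by (rule orbitE)
    then have "y = (f ^^ (n mod m)) b" by (simp add: funpow_mod_period[OF m(2)])
    moreover have "n mod m < m" using m(1) by simp
    ultimately show "y \<in> (\<lambda>k. (f ^^ k) b) ` {..<m}" by blast
  qed
  then show ?thesis by (rule finite_subset) simp
qed

lemma periodic_point_in_orbit_of_orbit:
  assumes "periodic_point f b" "c \<in> orbit f b"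
  shows "b \<in> orbit f c"
proof -
  obtain m where m: "m \<ge> 1" "(f ^^ m) b = b"
    using assms(1) by (auto simp: periodic_point_def)
  obtain k where c: "c = (f ^^ k) b" using assms(2) by (rule orbitE)
  have "(f ^^ ((m - 1) * k)) c = (f ^^ ((m - 1) * k + k)) b"
    by (simp add: c funpow_add_apply)
  also have "(m - 1) * k + k = m * k"
    using m(1) by (cases m) auto
  also have "(f ^^ (m * k)) b = b"
    using funpow_mod_period[OF m(2), of "m * k"] by simp
  finally show ?thesis by (metis funpow_in_orbit)
qed

lemma periodic_point_funpow:
  assumes "periodic_point f b"
  shows "periodic_point f ((f ^^ k) b)"
proof -
  obtain m where m: "m \<ge> 1" "(f ^^ m) b = b"
    using assms by (auto simp: periodic_point_def)
  have "(f ^^ m) ((f ^^ k) b) = (f ^^ k) ((f ^^ m) b)"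
    by (simp add: funpow_add_apply add.commute)
  with m show ?thesis by (auto simp: periodic_point_def)
qed

lemma periodic_point_funpow_if_not_inj:
  assumes "\<not> inj (\<lambda>n. (f ^^ n) x)"
  obtains i where "periodic_point f ((f ^^ i) x)"
proof -
  obtain i j where ij: "i < j" "(f ^^ i) x = (f ^^ j) x"
    using assms unfolding inj_def by (metis linorder_neqE_nat)
  have "(f ^^ (j - i)) ((f ^^ i) x) = (f ^^ j) x"
    using ij(1) by (simp add: funpow_add_apply)
  also have "\<dots> = (f ^^ i) x" using ij(2) by simp
  finally have "(f ^^ (j - i)) ((f ^^ i) x) = (f ^^ i) x" .
  with ij(1) have "periodic_point f ((f ^^ i) x)"
    unfolding periodic_point_def by (intro exI[of _ "j - i"]) simp
  then show thesis by (rule that)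
qed

lemma finite_orbit_if_not_inj:
  assumes "\<not> inj (\<lambda>n. (f ^^ n) x)"
  shows "finite (orbit f x)"
proof -
  obtain i where i: "periodic_point f ((f ^^ i) x)"
    using assms by (rule periodic_point_funpow_if_not_inj)
  have "orbit f x \<subseteq> (\<lambda>n. (f ^^ n) x) ` {..<i} \<union> orbit f ((f ^^ i) x)"
  proof
    fix y assume "y \<in> orbit f x"
    then obtain n where "y = (f ^^ n) x" by (rule orbitE)
    then show "y \<in> (\<lambda>n. (f ^^ n) x) ` {..<i} \<union> orbit f ((f ^^ i) x)"
      by (cases "n < i") (auto intro: funpow_in_orbit_funpow)
  qed
  moreover have "finite (orbit f ((f ^^ i) x))"
    using i by (rule finite_orbit_if_periodic_point)
  ultimately show ?thesis by (meson finite_Un finite_imageI finite_lessThan finite_subset)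
qed

section \<open>Countable compact systems whose limit points are fixed\<close>

lemma obtain_radius_avoiding_countable:
  fixes S :: "real set"
  assumes "countable S" "0 < d"
  obtains r where "0 < r" "r < d" "r \<notin> S"
proof -
  have "\<not> {0<..<d} \<subseteq> S"
    using assms countable_subset uncountable_open_interval by blast
  then obtain r where "r \<in> {0<..<d}" "r \<notin> S" by blast
  with that show thesis by auto
qed

lemma tendsto_eventually_same_side:
  fixes g :: "'a \<Rightarrow> 'b::linorder_topology"
  assumes "(g \<longlongrightarrow> l) F" "l \<noteq> r"
  shows "eventually (\<lambda>x. g x < r \<longleftrightarrow> l < r) F"
proof (cases "l < r")
  case True
  with order_tendstoD(2)[OF assms(1) True] show ?thesis by simp
next
  case False
  with assms(2) have "r < l" by simp
  from order_tendstoD(1)[OF assms(1) this] show ?thesis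
    by eventually_elim (use False in auto)
qed

lemma p_iterate_fixed_point:
  assumes "free_ultrafilter p" "f a = a"
  shows "p_iterate p f a = a"
  using assms unfolding p_iterate_def
  by (simp add: funpow_fixed_point tendsto_Lim free_ultrafilter_iff ultrafilter_def)

locale limit_points_fixed_system =
  fixes X :: "'a::metric_space set" and f :: "'a \<Rightarrow> 'a"
  assumes compact_X: "compact X" and countable_X: "countable X"
    and f_maps_to: "f ` X \<subseteq> X" and continuous_f: "continuous_on X f"
    and fixed_if_limpt: "\<And>x. x \<in> X \<Longrightarrow> x islimpt X \<Longrightarrow> f x = x"
begin

definition crossings :: "'a \<Rightarrow> real \<Rightarrow> 'a set" where
  "crossings c r = {z \<in> X. (dist c z < r) \<noteq> (dist c (f z) < r)}"

lemma funpow_in_X: "x \<in> X \<Longrightarrow> (f ^^ n) x \<in> X"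
  by (induction n) (use f_maps_to in auto)

text \<open>A limit point of the crossings would be a fixed point off the sphere, and by continuity
  the points near it would not cross.\<close>

lemma finite_crossings:
  assumes r: "r \<notin> dist c ` X"
  shows "finite (crossings c r)"
proof (rule ccontr)
  assume "infinite (crossings c r)"
  then obtain w where w: "w \<in> X" "w islimpt crossings c r"
    using compact_X unfolding compact_eq_Bolzano_Weierstrass crossings_def by blast
  then have fw: "f w = w"
    using fixed_if_limpt islimpt_subset[of w "crossings c r" X] by (auto simp: crossings_def)
  have off_sphere: "dist c w \<noteq> r" using r w(1) by auto
  have "((\<lambda>z. dist c z) \<longlongrightarrow> dist c w) (at w within X)"
    by (intro tendsto_intros)
  moreover have "(f \<longlongrightarrow> f w) (at w within X)"
    using continuous_f w(1) by (simp add: continuous_on_def)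
  then have "((\<lambda>z. dist c (f z)) \<longlongrightarrow> dist c w) (at w within X)"
    unfolding fw by (intro tendsto_intros)
  ultimately have "eventually (\<lambda>z. (dist c z < r \<longleftrightarrow> dist c w < r) \<and>
      (dist c (f z) < r \<longleftrightarrow> dist c w < r)) (at w within X)"
    using off_sphere by (intro eventually_conj tendsto_eventually_same_side)
  then have "eventually (\<lambda>z. z \<notin> crossings c r) (at w)"
    unfolding eventually_at_filter by eventually_elim (auto simp: crossings_def)
  with w(2) show False by (simp add: islimpt_iff_eventually)
qed

lemma orbit_eventually_on_one_side:
  assumes x: "x \<in> X" and inj: "inj (\<lambda>n. (f ^^ n) x)" and r: "r \<notin> dist c ` X"
  obtains N where "\<forall>n\<ge>N. dist c ((f ^^ n) x) < r \<longleftrightarrow> dist c ((f ^^ N) x) < r"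
proof -
  have "finite ((\<lambda>n. (f ^^ n) x) -` crossings c r)"
    using finite_crossings[OF r] inj by (rule finite_vimageI)
  then obtain N where N: "\<And>n. (f ^^ n) x \<in> crossings c r \<Longrightarrow> n < N"
    by (auto simp: finite_nat_set_iff_bounded)
  have "dist c ((f ^^ n) x) < r \<longleftrightarrow> dist c ((f ^^ N) x) < r" if "N \<le> n" for n
    using that
  proof (induction n rule: dec_induct)
    case (step m)
    then have "(f ^^ m) x \<notin> crossings c r" using N by force
    with step.IH show ?case using funpow_in_X[OF x] by (auto simp: crossings_def)
  qed simp
  then show thesis using that by blast
qed

lemma
  assumes "free_ultrafilter p" "x \<in> X"
  shows tendsto_p_iterate: "((\<lambda>n. (f ^^ n) x) \<longlongrightarrow> p_iterate p f x) p"
    and p_iterate_in_X: "p_iterate p f x \<in> X"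
proof -
  have p: "ultrafilter p" using assms(1) by (simp add: free_ultrafilter_iff)
  have "eventually (\<lambda>n. (f ^^ n) x \<in> X) p" using funpow_in_X[OF assms(2)] by simp
  with p compact_X obtain y where y: "y \<in> X" "((\<lambda>n. (f ^^ n) x) \<longlongrightarrow> y) p"
    by (rule ultrafilter_tendsto_in_compact)
  moreover have "p_iterate p f x = y"
    unfolding p_iterate_def using p y(2) by (simp add: tendsto_Lim ultrafilter_def)
  ultimately show "((\<lambda>n. (f ^^ n) x) \<longlongrightarrow> p_iterate p f x) p" "p_iterate p f x \<in> X"
    by simp_all
qed

lemma p_iterate_in_closed:
  assumes p: "free_ultrafilter p" and x: "x \<in> X" and S: "closed S"
    and tail: "\<And>n. N \<le> n \<Longrightarrow> (f ^^ n) x \<in> S"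
  shows "p_iterate p f x \<in> S"
proof (rule Lim_in_closed_set[OF S _ _ tendsto_p_iterate[OF p x]])
  have "eventually (\<lambda>n. (f ^^ n) x \<in> S) sequentially"
    using tail by (rule eventually_sequentiallyI)
  then show "eventually (\<lambda>n. (f ^^ n) x \<in> S) p"
    using p by (auto simp: free_ultrafilter_iff intro: filter_leD)
  show "p \<noteq> bot" using p by (simp add: free_ultrafilter_iff ultrafilter_def)
qed

lemma p_iterate_in_closure_orbit:
  assumes "free_ultrafilter p" "x \<in> X"
  shows "p_iterate p f x \<in> closure (orbit f x)"
  using assms closed_closure by (rule p_iterate_in_closed[where N = 0]) (simp add: closure_subset[THEN subsetD])

text \<open>An injective orbit accumulates at its p-limit, which is therefore a fixed point; otherwise
  the orbit ends in a cycle containing the p-limit.\<close>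

lemma periodic_point_p_iterate:
  assumes p: "free_ultrafilter p" and x: "x \<in> X"
  shows "periodic_point f (p_iterate p f x)"
proof (cases "inj (\<lambda>n. (f ^^ n) x)")
  case True
  let ?y = "p_iterate p f x"
  have "?y islimpt X"
  proof (rule islimptI)
    fix T assume "?y \<in> T" "open T"
    with tendsto_p_iterate[OF p x] have "eventually (\<lambda>n. (f ^^ n) x \<in> T) p"
      by (simp add: topological_tendstoD)
    then have "infinite {n. (f ^^ n) x \<in> T}"
      using p by (rule free_ultrafilter_eventually_infinite[rotated])
    then have "infinite ((\<lambda>n. (f ^^ n) x) ` {n. (f ^^ n) x \<in> T} - {?y})"
      using True by (simp add: finite_image_iff inj_on_subset)
    then obtain z where "z \<in> (\<lambda>n. (f ^^ n) x) ` {n. (f ^^ n) x \<in> T}" "z \<noteq> ?y"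
      using infinite_imp_nonempty by blast
    then show "\<exists>z\<in>X. z \<in> T \<and> z \<noteq> ?y" using funpow_in_X[OF x] by auto
  qed
  then have "f ?y = ?y" using fixed_if_limpt p_iterate_in_X[OF p x] by blast
  then show ?thesis unfolding periodic_point_def by (intro exI[of _ 1]) simp
next
  case False
  then obtain i where i: "periodic_point f ((f ^^ i) x)"
    by (rule periodic_point_funpow_if_not_inj)
  have "closed (orbit f ((f ^^ i) x))"
    using i by (intro finite_imp_closed finite_orbit_if_periodic_point)
  with p x have "p_iterate p f x \<in> orbit f ((f ^^ i) x)"
    by (rule p_iterate_in_closed) (rule funpow_in_orbit_funpow)
  then show ?thesis using i by (auto elim!: orbitE intro: periodic_point_funpow)
qed

text \<open>An orbit accumulating at \<open>b\<close> is injective and so eventually stays on one side of any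
  sphere around \<open>b\<close> whose radius is not a distance; this forces its p-limit to be \<open>b\<close>.\<close>

lemma p_iterate_eq_if_limpt_orbit:
  assumes p: "free_ultrafilter p" and x: "x \<in> X" and limpt: "b islimpt orbit f x"
  shows "p_iterate p f x = b"
proof (rule ccontr)
  let ?y = "p_iterate p f x"
  assume "?y \<noteq> b"
  then have "0 < dist b ?y" by simp
  with countable_image[OF countable_X] obtain r where r: "0 < r" "r < dist b ?y" "r \<notin> dist b ` X"
    by (rule obtain_radius_avoiding_countable)
  have "inj (\<lambda>n. (f ^^ n) x)"
    using islimpt_finite[OF finite_orbit_if_not_inj] limpt by blast
  with x obtain N where N: "\<forall>n\<ge>N. dist b ((f ^^ n) x) < r \<longleftrightarrow> dist b ((f ^^ N) x) < r"
    using r(3) by (rule orbit_eventually_on_one_side)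
  show False
  proof (cases "dist b ((f ^^ N) x) < r")
    case True
    have "(f ^^ n) x \<in> cball b r" if "N \<le> n" for n
      using N that True by (simp add: less_imp_le)
    with p x closed_cball have "?y \<in> cball b r" by (rule p_iterate_in_closed)
    with r(2) show False by simp
  next
    case False
    have "orbit f x \<subseteq> (\<lambda>n. (f ^^ n) x) ` {..<N} \<union> - ball b r"
    proof
      fix z assume "z \<in> orbit f x"
      then obtain n where "z = (f ^^ n) x" by (rule orbitE)
      with N False show "z \<in> (\<lambda>n. (f ^^ n) x) ` {..<N} \<union> - ball b r"
        by (cases "n < N") auto
    qed
    with limpt have "b islimpt (\<lambda>n. (f ^^ n) x) ` {..<N} \<union> - ball b r"
      by (rule islimpt_subset)
    then have "b islimpt - ball b r"
      by (simp add: islimpt_Un islimpt_finite)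
    moreover have "closed (- ball b r)" by (simp add: closed_Compl)
    ultimately have "b \<in> - ball b r" using closed_limpt by blast
    with r(1) show False by simp
  qed
qed

lemma p_iterate_in_orbit_if_periodic_in_closure:
  assumes p: "free_ultrafilter p" and x: "x \<in> X"
    and b: "periodic_point f b" "b \<in> closure (orbit f x)"
  shows "p_iterate p f x \<in> orbit f b"
proof (cases "b \<in> orbit f x")
  case True
  then obtain j where j: "b = (f ^^ j) x" by (rule orbitE)
  have "closed (orbit f b)"
    using b(1) by (intro finite_imp_closed finite_orbit_if_periodic_point)
  with p x show ?thesis
    by (rule p_iterate_in_closed) (unfold j, rule funpow_in_orbit_funpow)
next
  case False
  with b(2) have "b islimpt orbit f x" by (auto simp: closure_def)
  with p x have "p_iterate p f x = b" by (rule p_iterate_eq_if_limpt_orbit)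
  then show ?thesis by simp
qed

lemma orbit_leaves_ball_if_p_iterate_outside:
  assumes p: "free_ultrafilter p" and x: "x \<in> X" and r: "r \<notin> dist c ` X"
    and inside: "dist c x < r" and outside: "r \<le> dist c (p_iterate p f x)"
  obtains m where "dist c ((f ^^ m) x) < r" "r \<le> dist c ((f ^^ Suc m) x)"
proof -
  have "\<exists>m. dist c ((f ^^ m) x) < r \<and> r \<le> dist c ((f ^^ Suc m) x)"
  proof (rule ccontr)
    assume "\<nexists>m. dist c ((f ^^ m) x) < r \<and> r \<le> dist c ((f ^^ Suc m) x)"
    then have "dist c ((f ^^ n) x) < r" for n
      by (induction n) (use inside in \<open>auto simp: not_le\<close>)
    then have "(f ^^ n) x \<in> cball c r" for n
      by (simp add: less_imp_le)
    with p x closed_cball have "p_iterate p f x \<in> cball c r"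
      by (rule p_iterate_in_closed)
    with outside have "dist c (p_iterate p f x) = r" by simp
    with r p_iterate_in_X[OF p x] show False by force
  qed
  then show thesis using that by blast
qed

lemma orbits_through_common_crossing:
  assumes p: "free_ultrafilter p" and r: "r \<notin> dist c ` X"
    and limpt: "c islimpt {x \<in> X. dist c x < r \<and> r \<le> dist c (p_iterate p f x)}"
  obtains w s where "w \<in> X" "\<And>n. s n \<in> X" "\<And>n. r \<le> dist c (p_iterate p f (s n))"
    "\<And>n. w \<in> orbit f (s n)" "s \<longlonglongrightarrow> c"
proof -
  define escaping where "escaping = {x \<in> X. dist c x < r \<and> r \<le> dist c (p_iterate p f x)}"
  define escaping_via where "escaping_via w = {x \<in> escaping. w \<in> orbit f x}" for w
  have "escaping \<subseteq> (\<Union>w \<in> crossings c r. escaping_via w)"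
  proof
    fix x assume x: "x \<in> escaping"
    then have "x \<in> X" "dist c x < r" "r \<le> dist c (p_iterate p f x)"
      by (simp_all add: escaping_def)
    then obtain m where m: "dist c ((f ^^ m) x) < r" "r \<le> dist c ((f ^^ Suc m) x)"
      by (rule orbit_leaves_ball_if_p_iterate_outside[OF p _ r])
    then have crossing: "(f ^^ m) x \<in> crossings c r"
      using x funpow_in_X by (auto simp: crossings_def escaping_def)
    have "x \<in> escaping_via ((f ^^ m) x)"
      using x by (simp add: escaping_via_def)
    with crossing show "x \<in> (\<Union>w \<in> crossings c r. escaping_via w)" by blast
  qed
  with limpt have "c islimpt (\<Union>w \<in> crossings c r. escaping_via w)"
    unfolding escaping_def by (rule islimpt_subset)
  then obtain w where w: "w \<in> crossings c r" "c islimpt escaping_via w"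
    unfolding islimpt_finite_union_iff[OF finite_crossings[OF r]] by blast
  from w(2) obtain s where s: "\<forall>n. s n \<in> escaping_via w - {c}" "s \<longlonglongrightarrow> c"
    unfolding islimpt_sequential by blast
  have "w \<in> X" using w(1) by (simp add: crossings_def)
  moreover have "s n \<in> X" "r \<le> dist c (p_iterate p f (s n))" "w \<in> orbit f (s n)" for n
    using s(1) by (simp_all add: escaping_via_def escaping_def)
  ultimately show thesis using s(2) by (rule that)
qed

lemma escaping_points_accumulate_if_p_iterate_discontinuous:
  assumes p: "free_ultrafilter p" and a: "f a = a"
    and discontinuous: "\<not> continuous (at a within X) (p_iterate p f)"
  obtains r where "0 < r" "r \<notin> dist a ` X"
    "a islimpt {x \<in> X. dist a x < r \<and> r \<le> dist a (p_iterate p f x)}"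
proof -
  let ?g = "p_iterate p f"
  have ga: "?g a = a" using p a by (rule p_iterate_fixed_point)
  have "\<not> (\<forall>e>0. \<exists>d>0. \<forall>x\<in>X. dist x a < d \<longrightarrow> dist (?g x) a < e)"
    using discontinuous unfolding continuous_within_eps_delta ga .
  then obtain e where e: "0 < e" and escape: "\<forall>d>0. \<exists>x\<in>X. dist x a < d \<and> e \<le> dist (?g x) a"
    by (meson not_less)
  from countable_image[OF countable_X] e obtain r where r: "0 < r" "r < e" "r \<notin> dist a ` X"
    by (rule obtain_radius_avoiding_countable)
  let ?escaping = "{x \<in> X. dist a x < r \<and> r \<le> dist a (?g x)}"
  have "a islimpt ?escaping"
  proof (unfold islimpt_approachable, intro allI impI)
    fix \<epsilon> :: real assume "0 < \<epsilon>"
    then obtain x where x: "x \<in> X" "dist x a < min \<epsilon> r" "e \<le> dist (?g x) a"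
      using escape r(1) by (meson min_less_iff_conj)
    then have "x \<noteq> a" using e ga by auto
    with x r(2) show "\<exists>x'\<in>?escaping. x' \<noteq> a \<and> dist x' a < \<epsilon>"
      by (intro bexI[of _ x]) (auto simp: dist_commute)
  qed
  with r(1,3) show thesis by (rule that)
qed

lemma periodic_in_orbit_closures_if_p_iterate_discontinuous:
  assumes p: "free_ultrafilter p" and a: "f a = a"
    and discontinuous: "\<not> continuous (at a within X) (p_iterate p f)"
  obtains b s where "b \<in> X - {a}" "periodic_point f b" "\<And>n. s n \<in> X" "s \<longlonglongrightarrow> a"
    "\<And>n. b \<in> closure (orbit f (s n))"
proof -
  let ?g = "p_iterate p f"
  obtain r where r: "0 < r" "r \<notin> dist a ` X"
    and escaping: "a islimpt {x \<in> X. dist a x < r \<and> r \<le> dist a (?g x)}"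
    using p a discontinuous by (rule escaping_points_accumulate_if_p_iterate_discontinuous)
  from p r(2) escaping obtain w s where w: "w \<in> X" and s: "\<And>n. s n \<in> X"
    "\<And>n. r \<le> dist a (?g (s n))" "\<And>n. w \<in> orbit f (s n)" "s \<longlonglongrightarrow> a"
    by (rule orbits_through_common_crossing) blast
  have b: "?g w \<in> closure (orbit f (s n))" for n
  proof -
    have "closure (orbit f w) \<subseteq> closure (orbit f (s n))"
      using s(3) by (intro closure_mono orbit_subset_orbit)
    with p_iterate_in_closure_orbit[OF p w] show ?thesis by blast
  qed
  have periodic_a: "periodic_point f a"
    unfolding periodic_point_def using a by (intro exI[of _ 1]) simp
  have "?g w \<noteq> a"
  proof
    assume "?g w = a"
    with b[of 0] have "a \<in> closure (orbit f (s 0))" by simp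
    with p s(1) periodic_a have "?g (s 0) \<in> orbit f a"
      by (rule p_iterate_in_orbit_if_periodic_in_closure)
    moreover have "orbit f a = {a}" using a by (rule orbit_fixed_point)
    ultimately have "?g (s 0) = a" by simp
    with s(2)[of 0] r(1) show False by simp
  qed
  with p_iterate_in_X[OF p w] have "?g w \<in> X - {a}" by simp
  from this periodic_point_p_iterate[OF p w] s(1) s(4) b show thesis by (rule that)
qed

lemma p_iterate_discontinuous_if_periodic_in_orbit_closures:
  assumes p: "free_ultrafilter p" and a: "f a = a"
    and b: "b \<noteq> a" "periodic_point f b"
    and s: "\<And>n. s n \<in> X" "s \<longlonglongrightarrow> a" "\<And>n. b \<in> closure (orbit f (s n))"
  shows "\<not> continuous (at a within X) (p_iterate p f)"
proof
  assume "continuous (at a within X) (p_iterate p f)"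
  then have "(\<lambda>n. p_iterate p f (s n)) \<longlonglongrightarrow> p_iterate p f a"
    using s(1,2) by (rule continuous_within_tendsto_compose')
  moreover have "p_iterate p f a = a" using p a by (rule p_iterate_fixed_point)
  ultimately have "(\<lambda>n. p_iterate p f (s n)) \<longlonglongrightarrow> a" by simp
  moreover have "p_iterate p f (s n) \<in> orbit f b" for n
    using p s(1) b(2) s(3) by (rule p_iterate_in_orbit_if_periodic_in_closure)
  ultimately have "a \<in> orbit f b"
    using b(2) by (intro Lim_in_closed_set[of _ _ sequentially] finite_imp_closed
        finite_orbit_if_periodic_point always_eventually) auto
  with b(2) have "b \<in> orbit f a" by (rule periodic_point_in_orbit_of_orbit)
  moreover have "orbit f a = {a}" using a by (rule orbit_fixed_point)
  ultimately show False using b(1) by simp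
qed

end

theorem theorem3p5:
  fixes X :: "'a::metric_space set" and f :: "'a \<Rightarrow> 'a" and a :: 'a
  assumes "compact X" and "countable X"
    and "f ` X \<subseteq> X" and "continuous_on X f"
    and "\<And>x. x \<in> X \<Longrightarrow> x islimpt X \<Longrightarrow> f x = x"
    and "a \<in> X" and "a islimpt X"
  shows "((\<exists>p. free_ultrafilter p \<and> \<not> continuous (at a within X) (p_iterate p f))
          \<longleftrightarrow>
          (\<exists>b s. b \<in> X - {a} \<and> periodic_point f b \<and> (\<forall>n. s n \<in> X) \<and>
                 s \<longlonglongrightarrow> a \<and> (\<forall>n. b \<in> closure (orbit f (s n)))))
       \<and>
         ((\<exists>b s. b \<in> X - {a} \<and> periodic_point f b \<and> (\<forall>n. s n \<in> X) \<and>
                 s \<longlonglongrightarrow> a \<and> (\<forall>n. b \<in> closure (orbit f (s n))))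
          \<longleftrightarrow>
          (\<forall>p. free_ultrafilter p \<longrightarrow> \<not> continuous (at a within X) (p_iterate p f)))"
proof -
  interpret limit_points_fixed_system X f
    using assms(1-5) by unfold_locales
  have fixed: "f a = a" using assms(5-7) .
  let ?periodic_in_orbit_closures = "\<exists>b s. b \<in> X - {a} \<and> periodic_point f b \<and> (\<forall>n. s n \<in> X) \<and>
      s \<longlonglongrightarrow> a \<and> (\<forall>n. b \<in> closure (orbit f (s n)))"
  have "?periodic_in_orbit_closures"
    if "free_ultrafilter p" "\<not> continuous (at a within X) (p_iterate p f)" for p
    using that(1) fixed that(2)
    by (rule periodic_in_orbit_closures_if_p_iterate_discontinuous) blast
  moreover have "\<not> continuous (at a within X) (p_iterate p f)"
    if "?periodic_in_orbit_closures" "free_ultrafilter p" for p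
    using that p_iterate_discontinuous_if_periodic_in_orbit_closures[OF that(2) fixed] by blast
  ultimately show ?thesis using ex_free_ultrafilter by blast
qed

end
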